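(* Fix a cell with no source term ($S=0$) and total energy $E=1$, a positive integer $N_{obj}$, and a finite initial population $X_0$ of $N_0$ particles with positive weights summing to $1$. Apply repeatedly (with fresh independent uniform random variables) the cell-based population control step with conservative splitting described in the context, and let $N_l$ be the number of particles after the $l$-th iteration. Then there exists $c_1>0$ such that for all $L\ge0$, $$\mathbb{P}[N_0>N_{obj},N_1>N_{obj},\dots,N_L>N_{obj}]\le e^{-c_1(L-1)}.$$ In particular, the stopping time $\tau$ defined as the first $j\ge1$ such that $N_j\le N_{obj}$ is finite with probability one.
   Context: Cell-based population control step for a single cell with existing particle weights $w_1,\dots,w_N$, $E=\sum_pw_p$, source $S\ge0$, target number $N_{obj}\ge1$ and $E+S>0$: set $w_{obj}=(E+S)/N_{obj}$; if $S>0$ emit $N^{vol}=\max(1,\lfloor S/w_{obj}\rfloor)$ particles of weight $S/N^{vol}$. If $E>0$, for each existing particle draw independently $u_p\sim\mathcal U(0,1)$, $I_p=\lfloor w_p/w_{obj}\rfloor$, $R_p=w_p/w_{obj}-I_p$; if $I_p=0$ (Russian Roulette) the particle is killed if $R_p<u_p$, otherwise its weight becomes $w_{obj}$; if $I_p\ge1$ (conservative Splitting) it is replaced by $N^{split}_p=I_p+\mathbf 1_{\{u_p<R_p\}}$ copies each of weight $w_p/N^{split}_p$. Then all weights are multiplied by a common factor so that the total is $E+S$. Non-void correction: if $S=0$ and no particle remains, the population becomes one particle of weight $E$. *)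

theory Defs
  imports "HOL-Probability.Probability"
begin

text \<open>Fate of one existing particle of weight w, given the target weight wobj
  and its uniform random number u (Russian roulette / conservative splitting).\<close>
definition particle_out :: "real \<Rightarrow> real \<Rightarrow> real \<Rightarrow> real list" where
  "particle_out wobj w u =
     (let I = nat \<lfloor>w / wobj\<rfloor>; R = w / wobj - real I in
      if I = 0 then (if R < u then [] else [wobj])
      else (let Ns = I + (if u < R then 1 else 0) in replicate Ns (w / real Ns)))"

definition pc_step :: "nat \<Rightarrow> real \<Rightarrow> real list \<Rightarrow> (nat \<Rightarrow> real) \<Rightarrow> real list" where
  "pc_step Nobj S ws u =
     (let E = sum_list ws; wobj = (E + S) / real Nobj;
          Nv = max 1 (nat \<lfloor>S / wobj\<rfloor>);
          src = (if S > 0 then replicate Nv (S / real Nv) else []);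
          ex = (if E > 0 then concat (map (\<lambda>p. particle_out wobj (ws ! p) (u p)) [0..<length ws]) else []);
          all = src @ ex;
          T = sum_list all;
          res = map (\<lambda>x. x * ((E + S) / T)) all
      in if S = 0 \<and> all = [] then [E] else res)"

text \<open>Iterated population: omega (l, p) is the uniform random number used for
  particle p in iteration l+1.\<close>
primrec pop :: "nat \<Rightarrow> real list \<Rightarrow> (nat \<times> nat \<Rightarrow> real) \<Rightarrow> nat \<Rightarrow> real list" where
  "pop Nobj X0 \<omega> 0 = X0"
| "pop Nobj X0 \<omega> (Suc l) = pc_step Nobj 0 (pop Nobj X0 \<omega> l) (\<lambda>p. \<omega> (l, p))"

definition unif_space :: "(nat \<times> nat \<Rightarrow> real) measure" where
  "unif_space = PiM UNIV (\<lambda>_. uniform_measure lborel {0..1::real})"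

end

theory Submission
  imports Defs
begin

text \<open>Given the current population, Russian roulette and conservative splitting produce on
  average \<open>\<Sum>p. w_p / w_obj = N_obj\<close> particles, so by Markov's inequality the population exceeds
  \<open>N_obj\<close> again with probability at most \<open>q = N_obj / (N_obj + 1)\<close>. Each step consumes fresh
  uniform variables, independent of the past, and the population takes only countably many
  values; conditioning on it shows that the population stays above \<open>N_obj\<close> for \<open>L\<close> steps
  with probability at most \<open>q ^ L = exp (- c1 * L)\<close>, where \<open>c1 = ln ((N_obj + 1) / N_obj)\<close>.\<close>

section \<open>Events determined by disjoint sets of coordinates\<close>

definition depends_only_on :: "('i \<Rightarrow> 'a) set \<Rightarrow> (('i \<Rightarrow> 'a) \<Rightarrow> 'b) \<Rightarrow> 'i set \<Rightarrow> bool" where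
  "depends_only_on \<Omega> f A \<longleftrightarrow> (\<forall>\<omega>\<in>\<Omega>. \<forall>\<omega>'\<in>\<Omega>. (\<forall>i\<in>A. \<omega> i = \<omega>' i) \<longrightarrow> f \<omega> = f \<omega>')"

lemma (in product_prob_space) indep_vars_coordinates: "P.indep_vars M (\<lambda>i \<omega>. \<omega> i) I"
proof (cases "I = {}")
  case True
  then show ?thesis unfolding P.indep_vars_def2 P.indep_sets_def by simp
next
  case False
  have "distr (PiM I M) (PiM I M) (\<lambda>\<omega>. restrict \<omega> I) = PiM I M"
    by (subst distr_cong[where g = "\<lambda>\<omega>. \<omega>"]) (auto simp: space_PiM)
  moreover have "(\<Pi>\<^sub>M i\<in>I. distr (PiM I M) (M i) (\<lambda>\<omega>. \<omega> i)) = PiM I M"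
    by (intro PiM_cong refl) (simp add: PiM_component)
  ultimately show ?thesis
    by (subst P.indep_vars_iff_distr_eq_PiM'[OF False]) auto
qed

lemma (in product_prob_space) sets_PiM_eq_vimage_restrict:
  assumes C: "C \<in> sets (PiM I M)" and "A \<subseteq> I"
    and dep: "depends_only_on (space (PiM I M)) (\<lambda>\<omega>. \<omega> \<in> C) A"
  obtains C' where "C' \<in> sets (PiM A M)" "C = (\<lambda>\<omega>. restrict \<omega> A) -` C' \<inter> space (PiM I M)"
proof -
  obtain \<omega>\<^sub>0 where \<omega>\<^sub>0: "\<omega>\<^sub>0 \<in> space (PiM I M)" using P.not_empty by blast
  define extend where "extend x = (\<lambda>i. if i \<in> A then x i else \<omega>\<^sub>0 i)" for x :: "'i \<Rightarrow> 'a"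
  have extend_measurable: "extend \<in> PiM A M \<rightarrow>\<^sub>M PiM I M"
    unfolding extend_def
  proof (rule measurable_PiM_single')
    show "(\<lambda>x. if i \<in> A then x i else \<omega>\<^sub>0 i) \<in> PiM A M \<rightarrow>\<^sub>M M i" if "i \<in> I" for i
      using \<omega>\<^sub>0 that by (cases "i \<in> A") (auto simp: space_PiM PiE_iff intro: measurable_const)
    show "(\<lambda>x i. if i \<in> A then x i else \<omega>\<^sub>0 i) \<in> space (PiM A M) \<rightarrow> (\<Pi>\<^sub>E i\<in>I. space (M i))"
      using \<omega>\<^sub>0 \<open>A \<subseteq> I\<close> by (auto simp: space_PiM PiE_def Pi_def extensional_def)
  qed
  have "C = (\<lambda>\<omega>. restrict \<omega> A) -` (extend -` C \<inter> space (PiM A M)) \<inter> space (PiM I M)"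
  proof -
    have "\<omega> \<in> C \<longleftrightarrow> extend (restrict \<omega> A) \<in> C" if \<omega>: "\<omega> \<in> space (PiM I M)" for \<omega>
    proof -
      have "restrict \<omega> A \<in> space (PiM A M)"
        using \<omega> \<open>A \<subseteq> I\<close> by (auto simp: space_PiM)
      then have "extend (restrict \<omega> A) \<in> space (PiM I M)"
        by (rule measurable_space[OF extend_measurable])
      moreover have "\<forall>i\<in>A. \<omega> i = extend (restrict \<omega> A) i"
        by (simp add: extend_def)
      ultimately show ?thesis
        using dep \<omega> unfolding depends_only_on_def by blast
    qed
    then show ?thesis using sets.sets_into_space[OF C] \<open>A \<subseteq> I\<close> by (auto simp: space_PiM PiE_iff) blast
  qed
  then show thesis using measurable_sets[OF extend_measurable C] that by blast
qed

lemma (in product_prob_space) prob_Int_disjoint_coordinates: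
  assumes C: "C \<in> sets (PiM I M)" and D: "D \<in> sets (PiM I M)"
    and AB: "A \<inter> B = {}" "A \<subseteq> I" "B \<subseteq> I"
    and "depends_only_on (space (PiM I M)) (\<lambda>\<omega>. \<omega> \<in> C) A"
    and "depends_only_on (space (PiM I M)) (\<lambda>\<omega>. \<omega> \<in> D) B"
  shows "P.prob (C \<inter> D) = P.prob C * P.prob D"
proof -
  obtain C' where C': "C' \<in> sets (PiM A M)" "C = (\<lambda>\<omega>. restrict \<omega> A) -` C' \<inter> space (PiM I M)"
    using sets_PiM_eq_vimage_restrict assms by metis
  obtain D' where D': "D' \<in> sets (PiM B M)" "D = (\<lambda>\<omega>. restrict \<omega> B) -` D' \<inter> space (PiM I M)"
    using sets_PiM_eq_vimage_restrict assms by metis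
  have "C \<inter> D = (\<lambda>\<omega>. (restrict \<omega> A, restrict \<omega> B)) -` (C' \<times> D') \<inter> space (PiM I M)"
    using C'(2) D'(2) by auto
  then show ?thesis
    using P.indep_varD[OF P.indep_var_restrict[OF indep_vars_coordinates AB] C'(1) D'(1)] C'(2) D'(2)
    by simp
qed

lemma (in finite_measure) measure_UN_le_mult:
  assumes S: "countable S" and disj: "disjoint_family_on C S"
    and sets: "\<And>v. v \<in> S \<Longrightarrow> C v \<in> sets M" "\<And>v. v \<in> S \<Longrightarrow> E v \<in> sets M"
    and sub: "\<And>v. v \<in> S \<Longrightarrow> E v \<subseteq> C v"
    and le: "\<And>v. v \<in> S \<Longrightarrow> measure M (E v) \<le> q * measure M (C v)" and "0 \<le> q"
  shows "measure M (\<Union>v\<in>S. E v) \<le> q * measure M (\<Union>v\<in>S. C v)"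
proof -
  have disj_E: "disjoint_family_on E S"
    using disj sub by (fastforce simp: disjoint_family_on_def)
  have "emeasure M (\<Union>v\<in>S. E v) = (\<integral>\<^sup>+v. emeasure M (E v) \<partial>count_space S)"
    using sets(2) S disj_E by (rule emeasure_UN_countable)
  also have "\<dots> \<le> (\<integral>\<^sup>+v. ennreal q * emeasure M (C v) \<partial>count_space S)"
  proof (rule nn_integral_mono)
    fix v assume "v \<in> space (count_space S)"
    then have "ennreal (measure M (E v)) \<le> ennreal (q * measure M (C v))"
      using le by (intro ennreal_leI) simp
    then show "emeasure M (E v) \<le> ennreal q * emeasure M (C v)"
      using \<open>0 \<le> q\<close> by (simp add: emeasure_eq_measure ennreal_mult)
  qed
  also have "\<dots> = ennreal q * emeasure M (\<Union>v\<in>S. C v)"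
    using sets(1) S disj by (simp add: nn_integral_cmult emeasure_UN_countable)
  finally have "ennreal (measure M (\<Union>v\<in>S. E v)) \<le> ennreal (q * measure M (\<Union>v\<in>S. C v))"
    using \<open>0 \<le> q\<close> by (simp add: emeasure_eq_measure ennreal_mult)
  then show ?thesis
    using \<open>0 \<le> q\<close> by (simp add: ennreal_le_iff)
qed

text \<open>Condition on the countably many values of the past observable \<open>g\<close>: on each fibre,
  \<open>D (g \<omega>)\<close> is a fixed event in the fresh coordinates \<open>B\<close>, hence independent of the fibre.\<close>

lemma (in product_prob_space) prob_fresh_event_le:
  fixes g :: "('i \<Rightarrow> 'a) \<Rightarrow> 'b" and D :: "'b \<Rightarrow> ('i \<Rightarrow> 'a) set"
  assumes C: "C \<in> sets (PiM I M)"
    and g: "g \<in> PiM I M \<rightarrow>\<^sub>M count_space UNIV" "countable (g ` space (PiM I M))"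
    and D: "\<And>v. v \<in> g ` C \<Longrightarrow> D v \<in> sets (PiM I M)"
    and q: "0 \<le> q" "\<And>v. v \<in> g ` C \<Longrightarrow> P.prob (D v) \<le> q"
    and AB: "A \<inter> B = {}" "A \<subseteq> I" "B \<subseteq> I"
    and C_dep: "depends_only_on (space (PiM I M)) (\<lambda>\<omega>. \<omega> \<in> C) A"
    and g_dep: "depends_only_on (space (PiM I M)) g A"
    and D_dep: "\<And>v. v \<in> g ` C \<Longrightarrow> depends_only_on (space (PiM I M)) (\<lambda>\<omega>. \<omega> \<in> D v) B"
  shows "P.prob {\<omega> \<in> C. \<omega> \<in> D (g \<omega>)} \<le> q * P.prob C"
proof -
  define C' where "C' v = C \<inter> g -` {v}" for v
  have C_space: "C \<subseteq> space (PiM I M)" using C by (rule sets.sets_into_space)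
  have C'_sets: "C' v \<in> sets (PiM I M)" for v
  proof -
    have "C' v = C \<inter> (g -` {v} \<inter> space (PiM I M))" using C_space by (auto simp: C'_def)
    then show ?thesis using C measurable_sets[OF g(1)] by simp
  qed
  have C'_dep: "depends_only_on (space (PiM I M)) (\<lambda>\<omega>. \<omega> \<in> C' v) A" for v
    unfolding depends_only_on_def
  proof (intro ballI impI)
    fix \<omega> \<omega>' assume "\<omega> \<in> space (PiM I M)" "\<omega>' \<in> space (PiM I M)" "\<forall>i\<in>A. \<omega> i = \<omega>' i"
    then have "(\<omega> \<in> C) = (\<omega>' \<in> C)" "g \<omega> = g \<omega>'"
      using C_dep g_dep unfolding depends_only_on_def by blast+
    then show "(\<omega> \<in> C' v) = (\<omega>' \<in> C' v)" by (simp add: C'_def)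
  qed
  have fibre_le: "P.prob (C' v \<inter> D v) \<le> q * P.prob (C' v)" if "v \<in> g ` C" for v
  proof -
    have "P.prob (C' v \<inter> D v) = P.prob (C' v) * P.prob (D v)"
      using C'_sets D[OF that] AB C'_dep D_dep[OF that] by (rule prob_Int_disjoint_coordinates)
    also have "\<dots> \<le> q * P.prob (C' v)"
      using mult_left_mono[OF q(2)[OF that] measure_nonneg] by (simp add: mult.commute)
    finally show ?thesis .
  qed
  have "P.prob (\<Union>v\<in>g ` C. C' v \<inter> D v) \<le> q * P.prob (\<Union>v\<in>g ` C. C' v)"
    using countable_subset[OF image_mono[OF C_space] g(2)] C'_sets D fibre_le q(1)
    by (intro P.measure_UN_le_mult) (auto simp: disjoint_family_on_def C'_def)
  moreover have "(\<Union>v\<in>g ` C. C' v \<inter> D v) = {\<omega> \<in> C. \<omega> \<in> D (g \<omega>)}" "(\<Union>v\<in>g ` C. C' v) = C"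
    by (auto simp: C'_def)
  ultimately show ?thesis by simp
qed

section \<open>Roulette, splitting and rescaling\<close>

abbreviation uniform01 :: "real measure" where
  "uniform01 \<equiv> uniform_measure lborel {0..1}"

lemma prob_space_uniform01: "prob_space uniform01"
  by (rule prob_space_uniform_measure) auto

lemma measure_uniform01_below:
  assumes "0 \<le> r" "r \<le> 1"
  shows "measure uniform01 {..r} = r" "measure uniform01 {..<r} = r"
proof -
  have "{0..1} \<inter> {..r} = {0..r}" "{0..1} \<inter> {..<r} = {0..<r}"
    using assms by auto
  then show "measure uniform01 {..r} = r" "measure uniform01 {..<r} = r"
    using assms by simp_all
qed

lemma particle_out_pos:
  assumes "0 < wobj" "0 < w" "x \<in> set (particle_out wobj w u)"
  shows "0 < x"
proof -
  have "0 < real_of_int \<lfloor>w / wobj\<rfloor> + 1"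
    using assms(1,2) by (simp add: add_nonneg_pos)
  then show ?thesis
    using assms by (auto simp: particle_out_def Let_def split: if_splits)
qed

lemma length_particle_out_le: "length (particle_out wobj w u) \<le> nat \<lfloor>w / wobj\<rfloor> + 1"
  by (auto simp: particle_out_def Let_def)

lemma finite_range_particle_out: "finite (range (particle_out wobj w))"
proof (rule finite_subset)
  let ?I = "nat \<lfloor>w / wobj\<rfloor>"
  show "range (particle_out wobj w) \<subseteq>
    {[], [wobj], replicate ?I (w / real ?I), replicate (?I + 1) (w / real (?I + 1))}"
    by (auto simp: particle_out_def Let_def)
qed simp

lemma measurable_particle_out: "particle_out wobj w \<in> borel \<rightarrow>\<^sub>M count_space UNIV"
  unfolding particle_out_def Let_def by measurable

lemma integral_length_particle_out:
  assumes "0 < wobj" "0 < w"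
  shows "(\<integral>u. real (length (particle_out wobj w u)) \<partial>uniform01) = w / wobj"
proof -
  interpret prob_space uniform01 by (rule prob_space_uniform01)
  define I where "I = nat \<lfloor>w / wobj\<rfloor>"
  define R where "R = w / wobj - real I"
  have "0 < w / wobj" using assms by simp
  then have R: "0 \<le> R" "R \<le> 1" unfolding R_def I_def by linarith+
  have length_eq: "length (particle_out wobj w u) =
      (if I = 0 then (if R < u then 0 else 1) else I + (if u < R then 1 else 0))" for u
    unfolding particle_out_def Let_def I_def[symmetric] R_def[symmetric] by simp
  show ?thesis
  proof (cases "I = 0")
    case True
    then have "(\<lambda>u. real (length (particle_out wobj w u))) = indicator {..R}"
      by (auto simp: length_eq indicator_def)
    then show ?thesis
      using R True by (simp add: measure_uniform01_below R_def del: measure_uniform_measure)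
  next
    case False
    then have "(\<lambda>u. real (length (particle_out wobj w u))) = (\<lambda>u. real I + indicator {..<R} u)"
      by (auto simp: length_eq indicator_def)
    moreover have "integrable uniform01 (indicator {..<R} :: real \<Rightarrow> real)"
      by (rule integrable_real_indicator) (auto simp: emeasure_eq_measure)
    moreover have "prob UNIV = 1"
      using prob_space by simp
    ultimately show ?thesis
      using R by (simp add: measure_uniform01_below R_def del: measure_uniform_measure)
  qed
qed

definition offspring :: "nat \<Rightarrow> real list \<Rightarrow> (nat \<Rightarrow> real) \<Rightarrow> real list list" where
  "offspring Nobj ws u = map (\<lambda>p. particle_out (sum_list ws / real Nobj) (ws ! p) (u p)) [0..<length ws]"

definition rescale_population :: "real \<Rightarrow> real list \<Rightarrow> real list" where
  "rescale_population E xs = (if xs = [] then [E] else map (\<lambda>x. x * (E / sum_list xs)) xs)"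

lemma pc_step_source_free:
  "pc_step Nobj 0 ws u =
    (if 0 < sum_list ws then rescale_population (sum_list ws) (concat (offspring Nobj ws u))
     else [sum_list ws])"
  by (simp add: pc_step_def rescale_population_def offspring_def Let_def)

lemma length_rescale_population: "length (rescale_population E xs) = max 1 (length xs)"
  by (cases xs) (simp_all add: rescale_population_def)

lemma length_concat_offspring:
  "length (concat (offspring Nobj ws u)) =
    (\<Sum>p<length ws. length (particle_out (sum_list ws / real Nobj) (ws ! p) (u p)))"
  by (simp add: offspring_def length_concat sum_list_sum_nth lessThan_atLeast0 del: map_map)

lemma length_pc_step:
  "0 < sum_list ws \<Longrightarrow> length (pc_step Nobj 0 ws u) = max 1 (length (concat (offspring Nobj ws u)))"
  by (simp add: pc_step_source_free length_rescale_population)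

definition positive_population :: "real list \<Rightarrow> bool" where
  "positive_population ws \<longleftrightarrow> ws \<noteq> [] \<and> (\<forall>w\<in>set ws. 0 < w)"

lemma sum_list_pos:
  fixes xs :: "'a :: strict_ordered_comm_monoid_add list"
  shows "xs \<noteq> [] \<Longrightarrow> (\<And>x. x \<in> set xs \<Longrightarrow> 0 < x) \<Longrightarrow> 0 < sum_list xs"
  using sum_list_strict_mono[of xs "\<lambda>_. 0" "\<lambda>x. x"] by simp

lemma positive_population_imp_sum_list_pos: "positive_population ws \<Longrightarrow> 0 < sum_list ws"
  unfolding positive_population_def using sum_list_pos by blast

lemma positive_population_rescale:
  assumes "0 < E" "\<And>x. x \<in> set xs \<Longrightarrow> 0 < x"
  shows "positive_population (rescale_population E xs)"
  using assms sum_list_pos[of xs]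
  by (auto simp: positive_population_def rescale_population_def)

lemma positive_population_pc_step:
  assumes "1 \<le> Nobj" "positive_population ws"
  shows "positive_population (pc_step Nobj 0 ws u)"
proof -
  have E: "0 < sum_list ws"
    using assms(2) by (rule positive_population_imp_sum_list_pos)
  then have wobj: "0 < sum_list ws / real Nobj" using assms(1) by simp
  have offspring_pos: "0 < x" if "x \<in> set (concat (offspring Nobj ws u))" for x
  proof -
    from that obtain p where "p < length ws" "x \<in> set (particle_out (sum_list ws / real Nobj) (ws ! p) (u p))"
      by (auto simp: offspring_def)
    then show ?thesis
      using particle_out_pos[OF wobj] assms(2) nth_mem unfolding positive_population_def by blast
  qed
  have "positive_population (rescale_population (sum_list ws) (concat (offspring Nobj ws u)))"
    using E offspring_pos by (rule positive_population_rescale)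
  then show ?thesis
    using E by (simp add: pc_step_source_free)
qed

lemma positive_population_pop:
  "1 \<le> Nobj \<Longrightarrow> positive_population X0 \<Longrightarrow> positive_population (pop Nobj X0 \<omega> l)"
  by (induction l) (simp_all add: positive_population_pc_step)

section \<open>Measurability of the iterated population\<close>

lemma countable_range_map:
  assumes "\<And>p. p \<in> set ps \<Longrightarrow> countable (range (f p))"
  shows "countable (range (\<lambda>x. map (\<lambda>p. f p x) ps))"
  using assms
proof (induction ps)
  case (Cons p ps)
  have "range (\<lambda>x. map (\<lambda>q. f q x) (p # ps)) \<subseteq>
      (\<lambda>(y, ys). y # ys) ` (range (f p) \<times> range (\<lambda>x. map (\<lambda>q. f q x) ps))"
    by auto
  moreover have "countable ((\<lambda>(y, ys). y # ys) ` (range (f p) \<times> range (\<lambda>x. map (\<lambda>q. f q x) ps)))"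
    using Cons by simp
  ultimately show ?case by (rule countable_subset)
qed simp

lemma measurable_map_count_space:
  assumes "\<And>p. p \<in> set ps \<Longrightarrow> f p \<in> M \<rightarrow>\<^sub>M count_space UNIV"
    and "\<And>p. p \<in> set ps \<Longrightarrow> countable (range (f p))"
  shows "(\<lambda>x. map (\<lambda>p. f p x) ps) \<in> M \<rightarrow>\<^sub>M count_space UNIV"
  using assms
proof (induction ps)
  case (Cons p ps)
  have rest: "(\<lambda>x. map (\<lambda>q. f q x) ps) \<in> M \<rightarrow>\<^sub>M count_space UNIV"
    by (rule Cons.IH) (simp_all add: Cons.prems)
  have "(\<lambda>x. f p x # map (\<lambda>q. f q x) ps) \<in> M \<rightarrow>\<^sub>M count_space UNIV"
  proof (rule measurable_compose_countable'[where f = "\<lambda>y x. y # map (\<lambda>q. f q x) ps" and g = "f p"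
        and I = "range (f p)"])
    show "(\<lambda>x. y # map (\<lambda>q. f q x) ps) \<in> M \<rightarrow>\<^sub>M count_space UNIV" for y
      using measurable_compose[OF rest measurable_count_space, of "(#) y"] by simp
    show "f p \<in> M \<rightarrow>\<^sub>M count_space (range (f p))"
      by (rule measurable_count_space_extend[of _ UNIV]) (simp_all add: Cons.prems)
    show "countable (range (f p))"
      by (simp add: Cons.prems)
  qed
  then show ?case by simp
qed simp

interpretation unif: product_prob_space "\<lambda>_. uniform01" "UNIV :: (nat \<times> nat) set"
  by (simp add: product_prob_space_def product_prob_space_axioms_def product_sigma_finite_def
      prob_space_uniform01 prob_space_imp_sigma_finite)

lemma space_unif_space [simp]: "space unif_space = UNIV"
  by (simp add: unif_space_def space_PiM)

lemma prob_space_unif_space: "prob_space unif_space"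
  unfolding unif_space_def by (rule unif.P.prob_space_axioms)

lemma measurable_unif_space_coordinate: "(\<lambda>\<omega>. \<omega> i) \<in> unif_space \<rightarrow>\<^sub>M borel"
proof -
  have "(\<lambda>\<omega>. \<omega> i) \<in> unif_space \<rightarrow>\<^sub>M uniform01"
    unfolding unif_space_def by (rule measurable_component_singleton) simp
  then show ?thesis by (simp cong: measurable_cong_sets)
qed

lemma countable_range_particle_out_row:
  "countable (range (\<lambda>u. particle_out wobj w (u i)))"
proof (rule countable_subset)
  show "range (\<lambda>u. particle_out wobj w (u i)) \<subseteq> range (particle_out wobj w)" by auto
qed (use finite_range_particle_out countable_finite in blast)

lemma countable_range_offspring: "countable (range (offspring Nobj ws))"
  unfolding offspring_def using countable_range_particle_out_row by (rule countable_range_map)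

lemma measurable_offspring_row:
  "(\<lambda>\<omega>. offspring Nobj ws (\<lambda>p. \<omega> (l, p))) \<in> unif_space \<rightarrow>\<^sub>M count_space UNIV"
  unfolding offspring_def
proof (rule measurable_map_count_space)
  show "(\<lambda>\<omega>. particle_out (sum_list ws / real Nobj) (ws ! p) (\<omega> (l, p))) \<in> unif_space \<rightarrow>\<^sub>M count_space UNIV"
    for p using measurable_unif_space_coordinate measurable_particle_out by (rule measurable_compose)
qed (rule countable_range_particle_out_row)

lemma countable_range_pc_step: "countable (range (pc_step Nobj 0 ws))"
proof (rule countable_subset)
  show "range (pc_step Nobj 0 ws) \<subseteq>
      insert [sum_list ws] ((\<lambda>os. rescale_population (sum_list ws) (concat os)) ` range (offspring Nobj ws))"
    by (auto simp: pc_step_source_free)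
qed (simp add: countable_range_offspring)

lemma measurable_pc_step_row:
  "(\<lambda>\<omega>. pc_step Nobj 0 ws (\<lambda>p. \<omega> (l, p))) \<in> unif_space \<rightarrow>\<^sub>M count_space UNIV"
proof -
  have "(\<lambda>os. rescale_population (sum_list ws) (concat os)) \<in> count_space UNIV \<rightarrow>\<^sub>M count_space UNIV"
    by simp
  from measurable_compose[OF measurable_offspring_row this] show ?thesis
    by (simp add: pc_step_source_free)
qed

lemma pop_eqI:
  "(\<And>k p. k < l \<Longrightarrow> \<omega> (k, p) = \<omega>' (k, p)) \<Longrightarrow> pop Nobj X0 \<omega> l = pop Nobj X0 \<omega>' l"
proof (induction l)
  case (Suc l)
  then have "pop Nobj X0 \<omega> l = pop Nobj X0 \<omega>' l" "(\<lambda>p. \<omega> (l, p)) = (\<lambda>p. \<omega>' (l, p))"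
    by simp_all
  then show ?case by simp
qed simp

lemma countable_range_pop: "countable (range (\<lambda>\<omega>. pop Nobj X0 \<omega> l))"
proof (induction l)
  case (Suc l)
  have "range (\<lambda>\<omega>. pop Nobj X0 \<omega> (Suc l)) \<subseteq>
      (\<Union>v\<in>range (\<lambda>\<omega>. pop Nobj X0 \<omega> l). range (pc_step Nobj 0 v))"
  proof
    fix ws assume "ws \<in> range (\<lambda>\<omega>. pop Nobj X0 \<omega> (Suc l))"
    then obtain \<omega> where "ws = pc_step Nobj 0 (pop Nobj X0 \<omega> l) (\<lambda>p. \<omega> (l, p))" by auto
    then show "ws \<in> (\<Union>v\<in>range (\<lambda>\<omega>. pop Nobj X0 \<omega> l). range (pc_step Nobj 0 v))" by blast
  qed
  moreover have "countable (\<Union>v\<in>range (\<lambda>\<omega>. pop Nobj X0 \<omega> l). range (pc_step Nobj 0 v))"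
    using Suc countable_range_pc_step by (rule countable_UN)
  ultimately show ?case by (rule countable_subset)
qed simp

lemma measurable_pop: "(\<lambda>\<omega>. pop Nobj X0 \<omega> l) \<in> unif_space \<rightarrow>\<^sub>M count_space UNIV"
proof (induction l)
  case (Suc l)
  have "(\<lambda>\<omega>. pc_step Nobj 0 (pop Nobj X0 \<omega> l) (\<lambda>p. \<omega> (l, p))) \<in> unif_space \<rightarrow>\<^sub>M count_space UNIV"
  proof (rule measurable_compose_countable'[where f = "\<lambda>v \<omega>. pc_step Nobj 0 v (\<lambda>p. \<omega> (l, p))"
        and g = "\<lambda>\<omega>. pop Nobj X0 \<omega> l" and I = "range (\<lambda>\<omega>. pop Nobj X0 \<omega> l)"])
    show "(\<lambda>\<omega>. pop Nobj X0 \<omega> l) \<in> unif_space \<rightarrow>\<^sub>M count_space (range (\<lambda>\<omega>. pop Nobj X0 \<omega> l))"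
      by (rule measurable_count_space_extend[OF subset_UNIV _ Suc]) simp
  qed (rule measurable_pc_step_row, rule countable_range_pop)
  then show ?case by simp
qed simp

lemma integral_unif_space_coordinate:
  fixes g :: "real \<Rightarrow> real"
  assumes "g \<in> borel_measurable borel"
  shows "(\<integral>\<omega>. g (\<omega> i) \<partial>unif_space) = (\<integral>u. g u \<partial>uniform01)"
proof -
  have "(\<lambda>\<omega>. \<omega> i) \<in> unif_space \<rightarrow>\<^sub>M uniform01"
    unfolding unif_space_def by (rule measurable_component_singleton) simp
  moreover have "g \<in> borel_measurable uniform01"
    using assms by (simp cong: measurable_cong_sets)
  ultimately show ?thesis
    using integral_distr[of "\<lambda>\<omega>. \<omega> i" unif_space uniform01 g]
    by (simp add: unif_space_def unif.PiM_component)
qed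

section \<open>Overpopulation probabilities\<close>

lemma expectation_offspring_count:
  assumes "1 \<le> Nobj" "positive_population ws"
  shows "integrable unif_space (\<lambda>\<omega>. real (length (concat (offspring Nobj ws (\<lambda>p. \<omega> (l, p))))))"
    and "(\<integral>\<omega>. real (length (concat (offspring Nobj ws (\<lambda>p. \<omega> (l, p))))) \<partial>unif_space) = real Nobj"
proof -
  define X where "X = (\<lambda>\<omega>. real (length (concat (offspring Nobj ws (\<lambda>p. \<omega> (l, p))))))"
  interpret prob_space unif_space by (rule prob_space_unif_space)
  let ?wobj = "sum_list ws / real Nobj"
  define n where "n p u = real (length (particle_out ?wobj (ws ! p) u))" for p u
  have X_eq: "X = (\<lambda>\<omega>. \<Sum>p<length ws. n p (\<omega> (l, p)))"
    by (simp add: X_def n_def length_concat_offspring)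
  have E: "0 < sum_list ws"
    using assms(2) by (rule positive_population_imp_sum_list_pos)
  then have wobj: "0 < ?wobj" using assms(1) by simp
  have n_measurable: "n p \<in> borel_measurable borel" for p
  proof -
    have "(\<lambda>xs. real (length xs)) \<in> count_space UNIV \<rightarrow>\<^sub>M (borel :: real measure)" by simp
    with measurable_particle_out show ?thesis
      unfolding n_def by (rule measurable_compose)
  qed
  have n_integrable: "integrable unif_space (\<lambda>\<omega>. n p (\<omega> (l, p)))" for p
  proof (rule integrable_const_bound[where B = "real (nat \<lfloor>ws ! p / ?wobj\<rfloor> + 1)"])
    show "AE \<omega> in unif_space. norm (n p (\<omega> (l, p))) \<le> real (nat \<lfloor>ws ! p / ?wobj\<rfloor> + 1)"
      by (intro AE_I2) (simp only: n_def norm_of_nat of_nat_le_iff length_particle_out_le)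
    show "(\<lambda>\<omega>. n p (\<omega> (l, p))) \<in> borel_measurable unif_space"
      using measurable_unif_space_coordinate n_measurable by (rule measurable_compose)
  qed
  then have "integrable unif_space X"
    unfolding X_eq by (rule Bochner_Integration.integrable_sum)
  then show "integrable unif_space (\<lambda>\<omega>. real (length (concat (offspring Nobj ws (\<lambda>p. \<omega> (l, p))))))"
    unfolding X_def .
  have "(\<integral>\<omega>. n p (\<omega> (l, p)) \<partial>unif_space) = ws ! p / ?wobj" if "p < length ws" for p
    using integral_unif_space_coordinate[OF n_measurable] integral_length_particle_out[OF wobj]
      assms(2) that nth_mem unfolding n_def positive_population_def by simp
  then have "(\<integral>\<omega>. X \<omega> \<partial>unif_space) = (\<Sum>p<length ws. ws ! p / ?wobj)"
    unfolding X_eq using n_integrable by (simp add: Bochner_Integration.integral_sum)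
  also have "\<dots> = real Nobj"
    using E assms(1)
    by (simp add: sum_list_sum_nth lessThan_atLeast0 flip: sum_divide_distrib sum_distrib_right)
  finally show "(\<integral>\<omega>. real (length (concat (offspring Nobj ws (\<lambda>p. \<omega> (l, p))))) \<partial>unif_space) = real Nobj"
    unfolding X_def .
qed

lemma prob_pc_step_overpopulated_le:
  assumes "1 \<le> Nobj" "positive_population ws"
  shows "measure unif_space {\<omega>. Nobj < length (pc_step Nobj 0 ws (\<lambda>p. \<omega> (l, p)))}
    \<le> real Nobj / (real Nobj + 1)"
proof -
  interpret prob_space unif_space by (rule prob_space_unif_space)
  define X where "X \<omega> = real (length (concat (offspring Nobj ws (\<lambda>p. \<omega> (l, p)))))" for \<omega>
  have X: "integrable unif_space X" "(\<integral>\<omega>. X \<omega> \<partial>unif_space) = real Nobj"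
    unfolding X_def using expectation_offspring_count[OF assms] by simp_all
  have "0 < sum_list ws"
    using assms(2) by (rule positive_population_imp_sum_list_pos)
  then have "{\<omega>. Nobj < length (pc_step Nobj 0 ws (\<lambda>p. \<omega> (l, p)))} \<subseteq>
      {\<omega> \<in> space unif_space. real Nobj + 1 \<le> X \<omega>}"
    using assms(1) by (auto simp: length_pc_step X_def)
  then have "measure unif_space {\<omega>. Nobj < length (pc_step Nobj 0 ws (\<lambda>p. \<omega> (l, p)))}
      \<le> measure unif_space {\<omega> \<in> space unif_space. real Nobj + 1 \<le> X \<omega>}"
    using borel_measurable_integrable[OF X(1)] by (intro finite_measure_mono) measurable
  also have "\<dots> \<le> (\<integral>\<omega>. X \<omega> \<partial>unif_space) / (real Nobj + 1)"
    by (rule integral_Markov_inequality_measure[OF X(1) sets.top]) (auto simp: X_def)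
  finally show ?thesis
    using X(2) by simp
qed

definition overpopulated :: "nat \<Rightarrow> real list \<Rightarrow> nat \<Rightarrow> (nat \<times> nat \<Rightarrow> real) set" where
  "overpopulated Nobj X0 L = {\<omega>. \<forall>l\<in>{1..L}. Nobj < length (pop Nobj X0 \<omega> l)}"

lemma overpopulated_Suc:
  "overpopulated Nobj X0 (Suc L) = overpopulated Nobj X0 L \<inter> {\<omega>. Nobj < length (pop Nobj X0 \<omega> (Suc L))}"
  by (auto simp: overpopulated_def le_Suc_eq simp del: pop.simps)

lemma sets_pop_Collect: "{\<omega>. P (pop Nobj X0 \<omega> l)} \<in> sets unif_space"
  using measurable_sets[OF measurable_pop, of "{xs. P xs}" Nobj X0 l] by simp

lemma sets_overpopulated: "overpopulated Nobj X0 L \<in> sets unif_space"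
proof (induction L)
  case 0
  then show ?case using sets.top[of unif_space] by (simp add: overpopulated_def)
next
  case (Suc L)
  then show ?case
    unfolding overpopulated_Suc using sets_pop_Collect by (rule sets.Int)
qed

lemma overpopulated_depends_only_on_past:
  "depends_only_on UNIV (\<lambda>\<omega>. \<omega> \<in> overpopulated Nobj X0 L) {(k, p). k < L}"
  unfolding depends_only_on_def
proof (intro ballI impI)
  fix \<omega> \<omega>' :: "nat \<times> nat \<Rightarrow> real"
  assume "\<forall>i\<in>{(k, p). k < L}. \<omega> i = \<omega>' i"
  then have "\<forall>l\<in>{1..L}. pop Nobj X0 \<omega> l = pop Nobj X0 \<omega>' l"
    by (auto intro: pop_eqI)
  then show "(\<omega> \<in> overpopulated Nobj X0 L) = (\<omega>' \<in> overpopulated Nobj X0 L)"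
    unfolding overpopulated_def by simp
qed

lemma prob_overpopulated_Suc_le:
  assumes "1 \<le> Nobj" "positive_population X0"
  shows "measure unif_space (overpopulated Nobj X0 (Suc L))
    \<le> real Nobj / (real Nobj + 1) * measure unif_space (overpopulated Nobj X0 L)"
proof -
  define D where "D v = {\<omega>. Nobj < length (pc_step Nobj 0 v (\<lambda>p. \<omega> (L, p)))}" for v
  have "measure unif_space {\<omega> \<in> overpopulated Nobj X0 L. \<omega> \<in> D (pop Nobj X0 \<omega> L)}
      \<le> real Nobj / (real Nobj + 1) * measure unif_space (overpopulated Nobj X0 L)"
  proof (rule unif.prob_fresh_event_le[where g = "\<lambda>\<omega>. pop Nobj X0 \<omega> L" and D = D
        and A = "{(k, p). k < L}" and B = "{(k, p). k = L}", folded unif_space_def])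
    show "D v \<in> sets unif_space" for v
      using measurable_sets[OF measurable_pc_step_row, of "{xs. Nobj < length xs}" Nobj v L]
      by (simp add: D_def)
    show "measure unif_space (D v) \<le> real Nobj / (real Nobj + 1)"
      if "v \<in> (\<lambda>\<omega>. pop Nobj X0 \<omega> L) ` overpopulated Nobj X0 L" for v
      using that assms positive_population_pop prob_pc_step_overpopulated_le
      unfolding D_def by blast
    show "depends_only_on (space unif_space) (\<lambda>\<omega>. pop Nobj X0 \<omega> L) {(k, p). k < L}"
      by (auto simp: depends_only_on_def intro!: pop_eqI)
    show "depends_only_on (space unif_space) (\<lambda>\<omega>. \<omega> \<in> D v) {(k, p). k = L}" for v
    proof -
      have "(\<lambda>p. \<omega> (L, p)) = (\<lambda>p. \<omega>' (L, p))"
        if "\<forall>i\<in>{(k, p). k = L}. \<omega> i = \<omega>' i" for \<omega> \<omega>' :: "nat \<times> nat \<Rightarrow> real"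
        using that by auto
      then show ?thesis
        unfolding depends_only_on_def D_def by auto
    qed
  qed (auto simp: sets_overpopulated measurable_pop countable_range_pop overpopulated_depends_only_on_past)
  moreover have "overpopulated Nobj X0 (Suc L) = {\<omega> \<in> overpopulated Nobj X0 L. \<omega> \<in> D (pop Nobj X0 \<omega> L)}"
    by (auto simp: overpopulated_Suc D_def)
  ultimately show ?thesis by simp
qed

lemma prob_overpopulated_le:
  assumes "1 \<le> Nobj" "positive_population X0"
  shows "measure unif_space (overpopulated Nobj X0 L) \<le> (real Nobj / (real Nobj + 1)) ^ L"
proof (induction L)
  case 0
  then show ?case
    using prob_space.prob_le_1[OF prob_space_unif_space] by simp
next
  case (Suc L)
  have "measure unif_space (overpopulated Nobj X0 (Suc L))
      \<le> real Nobj / (real Nobj + 1) * measure unif_space (overpopulated Nobj X0 L)"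
    by (rule prob_overpopulated_Suc_le[OF assms])
  also have "\<dots> \<le> real Nobj / (real Nobj + 1) * (real Nobj / (real Nobj + 1)) ^ L"
    using Suc by (intro mult_left_mono) auto
  finally show ?case by simp
qed

lemma prob_overpopulated_forever:
  assumes "1 \<le> Nobj" "positive_population X0"
  shows "measure unif_space (\<Inter>L. overpopulated Nobj X0 L) = 0"
proof -
  interpret prob_space unif_space by (rule prob_space_unif_space)
  let ?q = "real Nobj / (real Nobj + 1)"
  have "measure unif_space (\<Inter>L. overpopulated Nobj X0 L) \<le> ?q ^ L" for L
  proof -
    have "measure unif_space (\<Inter>L. overpopulated Nobj X0 L) \<le> measure unif_space (overpopulated Nobj X0 L)"
      using sets_overpopulated
      by (intro finite_measure_mono) auto
    also have "\<dots> \<le> ?q ^ L" using assms by (rule prob_overpopulated_le)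
    finally show ?thesis .
  qed
  moreover have "(\<lambda>L. ?q ^ L) \<longlonglongrightarrow> 0" by (rule LIMSEQ_power_zero) simp
  ultimately have "measure unif_space (\<Inter>L. overpopulated Nobj X0 L) \<le> 0"
    by (intro tendsto_le[OF sequentially_bot _ tendsto_const]) auto
  then show ?thesis using measure_nonneg by (rule antisym)
qed

lemma prob_overpopulated_le_exp:
  assumes "1 \<le> Nobj" "positive_population X0"
  shows "measure unif_space (overpopulated Nobj X0 L) \<le> exp (- ln ((real Nobj + 1) / real Nobj) * real L)"
proof -
  let ?c = "ln ((real Nobj + 1) / real Nobj)"
  have "exp (- ?c * real L) = exp (- ?c) ^ L"
    by (metis exp_of_nat_mult mult.commute)
  also have "exp (- ?c) = real Nobj / (real Nobj + 1)"
    using assms(1) by (simp add: exp_minus inverse_divide)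
  finally show ?thesis
    using prob_overpopulated_le[OF assms] by simp
qed

theorem lemma3:
  fixes Nobj :: nat and X0 :: "real list"
  assumes "Nobj \<ge> 1"
    and "\<forall>w \<in> set X0. w > 0"
    and "sum_list X0 = 1"
  shows "(\<exists>c1 > 0. \<forall>L :: nat.
           measure unif_space {\<omega> \<in> space unif_space. \<forall>l \<le> L. length (pop Nobj X0 \<omega> l) > Nobj}
             \<le> exp (- c1 * (real L - 1)))
    \<and> (AE \<omega> in unif_space. \<exists>j \<ge> 1. length (pop Nobj X0 \<omega> j) \<le> Nobj)"
proof -
  interpret prob_space unif_space by (rule prob_space_unif_space)
  have X0: "positive_population X0"
    using assms(2,3) by (auto simp: positive_population_def)
  define c1 where "c1 = ln ((real Nobj + 1) / real Nobj)"
  have "0 < c1" using assms(1) by (simp add: c1_def)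
  have "measure unif_space {\<omega> \<in> space unif_space. \<forall>l \<le> L. length (pop Nobj X0 \<omega> l) > Nobj}
      \<le> exp (- c1 * (real L - 1))" for L
  proof -
    have "measure unif_space {\<omega> \<in> space unif_space. \<forall>l \<le> L. length (pop Nobj X0 \<omega> l) > Nobj}
        \<le> measure unif_space (overpopulated Nobj X0 L)"
      using sets_overpopulated
      by (intro finite_measure_mono) (auto simp: overpopulated_def)
    also have "\<dots> \<le> exp (- c1 * real L)"
      unfolding c1_def using assms(1) X0 by (rule prob_overpopulated_le_exp)
    also have "\<dots> \<le> exp (- c1 * (real L - 1))"
      using \<open>0 < c1\<close> by (simp add: algebra_simps)
    finally show ?thesis .
  qed
  moreover have "AE \<omega> in unif_space. \<exists>j \<ge> 1. length (pop Nobj X0 \<omega> j) \<le> Nobj"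
    using prob_overpopulated_forever[OF assms(1) X0] sets_overpopulated
    by (intro AE_I[where N = "\<Inter>L. overpopulated Nobj X0 L"])
      (auto simp: overpopulated_def emeasure_eq_measure)
  ultimately show ?thesis
    using \<open>0 < c1\<close> by blast
qed

end
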